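(* Let $p$ be a prime and $X$ a countable set. For every $A\in\mathcal{B}(\mathbb{Q}_p(X))$ we have $\ker(A)=\operatorname{im}(A^* )^\perp$.
   Context: $\mathbb{Q}_p(X)$ is the set of maps $\xi:X\to\mathbb{Q}_p$ with $|\xi(i)|_p\le1$ for all but finitely many $i$, a $\mathbb{Z}_p$-module under coordinatewise operations, with the topology $\tau$ in which $A\subseteq\mathbb{Q}_p(X)$ is open iff for every finite $P\subseteq X$ the set $A\cap\big(\prod_{i\in P}\mathbb{Q}_p\times\prod_{j\in X\setminus P}\mathbb{Z}_p\big)$ is open in the product topology. $\mathcal{B}(\mathbb{Q}_p(X))$ is the set of $\tau$-continuous $\mathbb{Z}_p$-linear maps. The pairing is $\langle\xi,\eta\rangle=\iota\big(\sum_{i\in X}(\xi(i)\eta(i)+\mathbb{Z}_p)\big)\in S^1$ with $\iota:\mathbb{Q}_p/\mathbb{Z}_p\cong\mathbb{Z}[1/p]/\mathbb{Z}\hookrightarrow\mathbb{R}/\mathbb{Z}\cong S^1$ canonical. $A^*$ is the unique operator in $\mathcal{B}(\mathbb{Q}_p(X))$ with $\langle A\xi,\eta\rangle=\langle\xi,A^*\eta\rangle$ for all $\xi,\eta$. For $K\subseteq\mathbb{Q}_p(X)$, $K^\perp=\{\xi:\langle\xi,\eta\rangle=1\ \forall\eta\in K\}$ (trivial value of the pairing). *)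

theory Defs
  imports "HOL-Analysis.Analysis" "HOL-Computational_Algebra.Primes"
begin

text \<open>An element of Z_p is represented by its compatible sequence of residues
  z n = (z mod p^n) with 0 <= z n < p^n.  An element of Q_p is represented in the
  normal form (k, z) meaning z / p^k, with z in Z_p and either k = 0 or z not divisible
  by p; this representation is unique.\<close>

type_synonym zp = "nat \<Rightarrow> int"
type_synonym qp = "nat \<times> zp"

definition Zp :: "int \<Rightarrow> zp set" where
  "Zp p = {z. \<forall>n. 0 \<le> z n \<and> z n < p ^ n \<and> z (Suc n) mod p ^ n = z n}"

definition zp_add :: "int \<Rightarrow> zp \<Rightarrow> zp \<Rightarrow> zp" where
  "zp_add p z w = (\<lambda>n. (z n + w n) mod p ^ n)"

definition zp_mul :: "int \<Rightarrow> zp \<Rightarrow> zp \<Rightarrow> zp" where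
  "zp_mul p z w = (\<lambda>n. (z n * w n) mod p ^ n)"

definition zp_neg :: "int \<Rightarrow> zp \<Rightarrow> zp" where
  "zp_neg p z = (\<lambda>n. (- z n) mod p ^ n)"

definition zp_of_int :: "int \<Rightarrow> int \<Rightarrow> zp" where
  "zp_of_int p a = (\<lambda>n. a mod p ^ n)"

definition zp_val :: "zp \<Rightarrow> nat" where
  "zp_val z = (LEAST n. z (Suc n) \<noteq> 0)"

definition qp_norm :: "int \<Rightarrow> nat \<Rightarrow> zp \<Rightarrow> qp" where
  "qp_norm p k z =
     (if (\<forall>n. z n = 0) then (0, \<lambda>n. 0)
      else (let m = min k (zp_val z) in (k - m, \<lambda>n. z (n + m) div p ^ m)))"

definition Qp :: "int \<Rightarrow> qp set" where
  "Qp p = {(k, z). z \<in> Zp p \<and> (k = 0 \<or> z 1 \<noteq> 0)}"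

definition qp_zero :: qp where
  "qp_zero = (0, \<lambda>n. 0)"

definition qp_add :: "int \<Rightarrow> qp \<Rightarrow> qp \<Rightarrow> qp" where
  "qp_add p x y = (case x of (k, z) \<Rightarrow> case y of (l, w) \<Rightarrow>
      qp_norm p (max k l)
        (zp_add p (zp_mul p (zp_of_int p (p ^ (max k l - k))) z)
                  (zp_mul p (zp_of_int p (p ^ (max k l - l))) w)))"

definition qp_mul :: "int \<Rightarrow> qp \<Rightarrow> qp \<Rightarrow> qp" where
  "qp_mul p x y = (case x of (k, z) \<Rightarrow> case y of (l, w) \<Rightarrow> qp_norm p (k + l) (zp_mul p z w))"

definition qp_neg :: "int \<Rightarrow> qp \<Rightarrow> qp" where
  "qp_neg p x = (case x of (k, z) \<Rightarrow> (k, zp_neg p z))"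

text \<open>Z_p as a subset of Q_p (elements with |x|_p <= 1).\<close>
definition ZpQ :: "int \<Rightarrow> qp set" where
  "ZpQ p = {x \<in> Qp p. fst x = 0}"

text \<open>The ball x + p^n Z_p.\<close>
definition qp_ball :: "int \<Rightarrow> qp \<Rightarrow> nat \<Rightarrow> qp set" where
  "qp_ball p x n = {y \<in> Qp p. fst (qp_add p y (qp_neg p x)) = 0 \<and> snd (qp_add p y (qp_neg p x)) n = 0}"

definition qp_top :: "int \<Rightarrow> qp topology" where
  "qp_top p = topology (\<lambda>U. U \<subseteq> Qp p \<and> (\<forall>x\<in>U. \<exists>n. qp_ball p x n \<subseteq> U))"

text \<open>Representative in [0,1) of the class of x in Q_p / Z_p = Z[1/p]/Z.\<close>
definition qp_frac :: "int \<Rightarrow> qp \<Rightarrow> real" where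
  "qp_frac p x = (case x of (k, z) \<Rightarrow> real_of_int (z k) / real_of_int (p ^ k))"

definition QpX :: "int \<Rightarrow> ('x \<Rightarrow> qp) set" where
  "QpX p = {\<xi>. (\<forall>i. \<xi> i \<in> Qp p) \<and> finite {i. \<xi> i \<notin> ZpQ p}}"

definition vzero :: "'x \<Rightarrow> qp" where
  "vzero = (\<lambda>i. qp_zero)"

definition vadd :: "int \<Rightarrow> ('x \<Rightarrow> qp) \<Rightarrow> ('x \<Rightarrow> qp) \<Rightarrow> ('x \<Rightarrow> qp)" where
  "vadd p \<xi> \<eta> = (\<lambda>i. qp_add p (\<xi> i) (\<eta> i))"

text \<open>Scalar multiplication by a in Z_p (a given as element of ZpQ).\<close>
definition vsmult :: "int \<Rightarrow> qp \<Rightarrow> ('x \<Rightarrow> qp) \<Rightarrow> ('x \<Rightarrow> qp)" where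
  "vsmult p a \<xi> = (\<lambda>i. qp_mul p a (\<xi> i))"

definition qp_box :: "int \<Rightarrow> 'x set \<Rightarrow> ('x \<Rightarrow> qp) set" where
  "qp_box p P = {\<xi>. \<forall>i. \<xi> i \<in> (if i \<in> P then Qp p else ZpQ p)}"

definition box_top :: "int \<Rightarrow> 'x set \<Rightarrow> ('x \<Rightarrow> qp) topology" where
  "box_top p P = product_topology
      (\<lambda>i. if i \<in> P then qp_top p else subtopology (qp_top p) (ZpQ p)) UNIV"

definition tau :: "int \<Rightarrow> ('x \<Rightarrow> qp) topology" where
  "tau p = topology (\<lambda>A. A \<subseteq> QpX p \<and>
      (\<forall>P. finite P \<longrightarrow> openin (box_top p P) (A \<inter> qp_box p P)))"

definition Bops :: "int \<Rightarrow> (('x \<Rightarrow> qp) \<Rightarrow> ('x \<Rightarrow> qp)) set" where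
  "Bops p = {A. (\<forall>\<xi>\<in>QpX p. A \<xi> \<in> QpX p)
     \<and> (\<forall>\<xi>\<in>QpX p. \<forall>\<eta>\<in>QpX p. A (vadd p \<xi> \<eta>) = vadd p (A \<xi>) (A \<eta>))
     \<and> (\<forall>a\<in>ZpQ p. \<forall>\<xi>\<in>QpX p. A (vsmult p a \<xi>) = vsmult p a (A \<xi>))
     \<and> continuous_map (tau p) (tau p) A}"

text \<open>The pairing with values in S^1 (unit circle in the complex plane);
  iota sends the class of t in Z[1/p]/Z to exp(2 pi i t).\<close>
definition pairing :: "int \<Rightarrow> ('x \<Rightarrow> qp) \<Rightarrow> ('x \<Rightarrow> qp) \<Rightarrow> complex" where
  "pairing p \<xi> \<eta> = cis (2 * pi *
      (\<Sum>i\<in>{i. qp_mul p (\<xi> i) (\<eta> i) \<notin> ZpQ p}. qp_frac p (qp_mul p (\<xi> i) (\<eta> i))))"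

definition is_adjoint :: "int \<Rightarrow> (('x \<Rightarrow> qp) \<Rightarrow> ('x \<Rightarrow> qp)) \<Rightarrow> (('x \<Rightarrow> qp) \<Rightarrow> ('x \<Rightarrow> qp)) \<Rightarrow> bool" where
  "is_adjoint p A B \<longleftrightarrow> B \<in> Bops p \<and>
     (\<forall>\<xi>\<in>QpX p. \<forall>\<eta>\<in>QpX p. pairing p (A \<xi>) \<eta> = pairing p \<xi> (B \<eta>))"

definition kerX :: "int \<Rightarrow> (('x \<Rightarrow> qp) \<Rightarrow> ('x \<Rightarrow> qp)) \<Rightarrow> ('x \<Rightarrow> qp) set" where
  "kerX p A = {\<xi> \<in> QpX p. A \<xi> = vzero}"

definition imX :: "int \<Rightarrow> (('x \<Rightarrow> qp) \<Rightarrow> ('x \<Rightarrow> qp)) \<Rightarrow> ('x \<Rightarrow> qp) set" where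
  "imX p A = A ` QpX p"

definition perpX :: "int \<Rightarrow> ('x \<Rightarrow> qp) set \<Rightarrow> ('x \<Rightarrow> qp) set" where
  "perpX p K = {\<xi> \<in> QpX p. \<forall>\<eta>\<in>K. pairing p \<xi> \<eta> = 1}"

end

theory Submission
  imports Defs "HOL-Library.Real_Mod"
begin

text \<open>The kernel lies in the annihilator by the adjoint identity applied to A xi = 0.
  Conversely, if xi annihilates the image of A*, then <A xi, eta> = <xi, A* eta> = 1 for
  every eta, and the pairing is nondegenerate: if a coordinate x = z / p^k of A xi is
  nonzero and p^v exactly divides z, pairing against p^-(v+1) in that coordinate gives
  exp (2 pi i u / p^(k+1)) with 0 < u < p^(k+1), which is not 1.\<close>

lemma Zp_at_0:
  assumes "z \<in> Zp p"
  shows "z 0 = 0"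
  using assms by (auto simp: Zp_def elim!: allE[of _ 0])

lemma Zp_mod_power:
  assumes "z \<in> Zp p"
  shows "z (n + j) mod p ^ n = z n"
proof (induction j)
  case 0
  then show ?case using assms by (simp add: Zp_def)
next
  case (Suc j)
  have "z (Suc (n + j)) mod p ^ (n + j) = z (n + j)" using assms by (simp add: Zp_def)
  moreover have "p ^ n dvd p ^ (n + j)" by (simp add: power_add)
  ultimately have "z (Suc (n + j)) mod p ^ n = z (n + j) mod p ^ n"
    by (metis mod_mod_cancel)
  then show ?case using Suc by simp
qed

lemma zp_of_int_in_Zp:
  assumes "p > 0"
  shows "zp_of_int p a \<in> Zp p"
  unfolding zp_of_int_def Zp_def
proof (intro CollectI allI conjI)
  fix n
  show "0 \<le> a mod p ^ n" and "a mod p ^ n < p ^ n" using assms by simp_all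
  have "p ^ n dvd p ^ Suc n" by simp
  then show "a mod p ^ Suc n mod p ^ n = a mod p ^ n" by (rule mod_mod_cancel)
qed

lemma zp_mul_one_right:
  assumes "z \<in> Zp p"
  shows "zp_mul p z (zp_of_int p 1) = z"
proof
  fix n
  have "zp_mul p z (zp_of_int p 1) n = (z n * (1 mod p ^ n)) mod p ^ n"
    by (simp add: zp_mul_def zp_of_int_def)
  also have "\<dots> = z n mod p ^ n" by (metis mod_mult_right_eq mult_1_right)
  also have "\<dots> = z n" using Zp_mod_power[OF assms, of n 0] by simp
  finally show "zp_mul p z (zp_of_int p 1) n = z n" .
qed

lemma zp_val_digit:
  assumes "z \<in> Zp p" and "z \<noteq> (\<lambda>n. 0)"
  shows "z (zp_val z) = 0" and "z (Suc (zp_val z)) \<noteq> 0"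
proof -
  obtain n where "z n \<noteq> 0" using assms(2) by auto
  with Zp_at_0[OF assms(1)] obtain m where "z (Suc m) \<noteq> 0" by (cases n) auto
  then show "z (Suc (zp_val z)) \<noteq> 0" unfolding zp_val_def by (rule LeastI)
  show "z (zp_val z) = 0"
  proof (cases "zp_val z")
    case 0
    then show ?thesis using Zp_at_0[OF assms(1)] by simp
  next
    case (Suc u)
    then have "\<not> z (Suc u) \<noteq> 0" unfolding zp_val_def by (intro not_less_Least) simp
    then show ?thesis using Suc by simp
  qed
qed

lemma qp_mul_zero_left: "qp_mul p qp_zero x = qp_zero"
  by (cases x) (simp add: qp_mul_def qp_zero_def qp_norm_def zp_mul_def)

lemma qp_mul_zero_right: "qp_mul p x qp_zero = qp_zero"
  by (cases x) (simp add: qp_mul_def qp_zero_def qp_norm_def zp_mul_def)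

lemma qp_zero_in_ZpQ: "p > 0 \<Longrightarrow> qp_zero \<in> ZpQ p"
  by (simp add: ZpQ_def Qp_def Zp_def qp_zero_def)

text \<open>The pair (v + 1, 1) is the normal form of p^-(v+1).\<close>
lemma qp_mul_inverse_power_val:
  assumes "z \<in> Zp p" and "z \<noteq> (\<lambda>n. 0)"
  shows "qp_mul p (k, z) (zp_val z + 1, zp_of_int p 1)
           = (k + 1, \<lambda>n. z (n + zp_val z) div p ^ zp_val z)"
  using assms by (auto simp: qp_mul_def zp_mul_one_right qp_norm_def Let_def)

lemma qp_frac_shift_val_bounds:
  assumes z: "z \<in> Zp p" and nz: "z \<noteq> (\<lambda>n. 0)" and p: "p > 0"
  defines "v \<equiv> zp_val z"
  shows "0 < qp_frac p (k + 1, \<lambda>n. z (n + v) div p ^ v)"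
    and "qp_frac p (k + 1, \<lambda>n. z (n + v) div p ^ v) < 1"
proof -
  define a where "a = z (k + 1 + v)"
  have "p ^ v dvd a"
    using Zp_mod_power[OF z, of v "k + 1"] zp_val_digit(1)[OF z nz]
    by (simp add: a_def v_def add.commute mod_eq_0_iff_dvd)
  then obtain b where ab: "a = p ^ v * b" by blast
  have "a mod p ^ (v + 1) \<noteq> 0"
    using Zp_mod_power[OF z, of "v + 1" k] zp_val_digit(2)[OF z nz]
    by (simp add: a_def v_def add.commute add.left_commute)
  then have "b \<noteq> 0" by (auto simp: ab)
  have "0 \<le> a" and "a < p ^ (k + 1 + v)"
    using z unfolding a_def Zp_def by blast+
  moreover have "0 < p ^ v" using p by simp
  ultimately have "0 \<le> b" and "b < p ^ (k + 1)"
    by (auto simp: ab power_add zero_le_mult_iff)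
  with \<open>b \<noteq> 0\<close> have "0 < real_of_int b" and "real_of_int b < real_of_int (p ^ (k + 1))"
    by (simp_all only: of_int_less_iff of_int_0_less_iff)
  moreover have "qp_frac p (k + 1, \<lambda>n. z (n + v) div p ^ v) = b / p ^ (k + 1)"
  proof -
    have "z (k + 1 + v) div p ^ v = b" unfolding a_def[symmetric] using p by (simp add: ab)
    then show ?thesis by (simp add: qp_frac_def)
  qed
  ultimately show "0 < qp_frac p (k + 1, \<lambda>n. z (n + v) div p ^ v)"
    and "qp_frac p (k + 1, \<lambda>n. z (n + v) div p ^ v) < 1"
    by (simp_all del: of_int_power)
qed

lemma Qp_exists_mul_frac_strict:
  assumes p: "p > 1" and x: "x \<in> Qp p" and nz: "x \<noteq> qp_zero"
  obtains y where "y \<in> Qp p" and "qp_mul p x y \<notin> ZpQ p"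
    and "0 < qp_frac p (qp_mul p x y)" and "qp_frac p (qp_mul p x y) < 1"
proof -
  obtain k z where xkz: "x = (k, z)" by (cases x)
  have z: "z \<in> Zp p" and kz: "k = 0 \<or> z 1 \<noteq> 0" using x xkz by (auto simp: Qp_def)
  have znz: "z \<noteq> (\<lambda>n. 0)" using nz kz xkz by (auto simp: qp_zero_def)
  let ?y = "(zp_val z + 1, zp_of_int p 1)"
  have "?y \<in> Qp p" using zp_of_int_in_Zp p by (simp add: Qp_def zp_of_int_def)
  then show thesis
    using qp_mul_inverse_power_val[OF z znz] qp_frac_shift_val_bounds[OF z znz] p
    by (intro that[of ?y]) (simp_all add: xkz ZpQ_def)
qed

lemma cis_2pi_ne_1:
  assumes "0 < t" and "t < 1"
  shows "cis (2 * pi * t) \<noteq> 1"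
proof
  assume "cis (2 * pi * t) = 1"
  then obtain n :: int where "t = n" by (auto simp: cis_eq_1_iff)
  with assms show False by simp
qed

lemma pairing_vzero_left: "p > 0 \<Longrightarrow> pairing p vzero \<eta> = 1"
  by (simp add: pairing_def vzero_def qp_mul_zero_left qp_zero_in_ZpQ)

lemma pairing_single_coordinate:
  assumes p: "p > 0" and "qp_mul p (\<zeta> i) y \<notin> ZpQ p"
  shows "pairing p \<zeta> ((\<lambda>j. qp_zero)(i := y)) = cis (2 * pi * qp_frac p (qp_mul p (\<zeta> i) y))"
proof -
  have "{j. qp_mul p (\<zeta> j) (((\<lambda>j. qp_zero)(i := y)) j) \<notin> ZpQ p} = {i}"
    using assms qp_zero_in_ZpQ[OF p] by (auto simp: qp_mul_zero_right)
  then show ?thesis by (simp add: pairing_def)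
qed

lemma single_coordinate_in_QpX:
  assumes "p > 0" and "y \<in> Qp p"
  shows "(\<lambda>j. qp_zero)(i := y) \<in> QpX p"
proof -
  have "{j. ((\<lambda>j. qp_zero)(i := y)) j \<notin> ZpQ p} \<subseteq> {i}"
    using qp_zero_in_ZpQ[OF assms(1)] by auto
  then show ?thesis
    using assms qp_zero_in_ZpQ[OF assms(1)] finite_subset
    by (auto simp: QpX_def ZpQ_def)
qed

lemma pairing_nondegenerate:
  assumes p: "p > 1" and \<zeta>: "\<zeta> \<in> QpX p" and nz: "\<zeta> \<noteq> vzero"
  obtains \<eta> where "\<eta> \<in> QpX p" and "pairing p \<zeta> \<eta> \<noteq> 1"
proof -
  obtain i where "\<zeta> i \<noteq> qp_zero" using nz by (auto simp: vzero_def)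
  moreover have "\<zeta> i \<in> Qp p" using \<zeta> by (simp add: QpX_def)
  ultimately obtain y where y: "y \<in> Qp p" and nint: "qp_mul p (\<zeta> i) y \<notin> ZpQ p"
    and "0 < qp_frac p (qp_mul p (\<zeta> i) y)" and "qp_frac p (qp_mul p (\<zeta> i) y) < 1"
    using Qp_exists_mul_frac_strict[OF p] by blast
  then have "pairing p \<zeta> ((\<lambda>j. qp_zero)(i := y)) \<noteq> 1"
    using pairing_single_coordinate[where \<zeta> = \<zeta> and i = i, OF _ nint] cis_2pi_ne_1 p by simp
  moreover have "(\<lambda>j. qp_zero)(i := y) \<in> QpX p"
    using single_coordinate_in_QpX[OF _ y] p by simp
  ultimately show thesis by (rule that[rotated])
qed

lemma kerX_eq_perpX_imX_adjoint:
  assumes p: "p > 1"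
    and A: "\<And>\<xi>. \<xi> \<in> QpX p \<Longrightarrow> A \<xi> \<in> QpX p"
    and adj: "\<And>\<xi> \<eta>. \<xi> \<in> QpX p \<Longrightarrow> \<eta> \<in> QpX p \<Longrightarrow> pairing p (A \<xi>) \<eta> = pairing p \<xi> (B \<eta>)"
  shows "kerX p A = perpX p (imX p B)"
proof (intro set_eqI iffI)
  fix \<xi> assume "\<xi> \<in> kerX p A"
  then show "\<xi> \<in> perpX p (imX p B)"
    using p by (auto simp: kerX_def perpX_def imX_def adj[symmetric] pairing_vzero_left)
next
  fix \<xi> assume "\<xi> \<in> perpX p (imX p B)"
  then have \<xi>: "\<xi> \<in> QpX p" and "\<And>\<eta>. \<eta> \<in> QpX p \<Longrightarrow> pairing p (A \<xi>) \<eta> = 1"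
    by (auto simp: perpX_def imX_def adj)
  then have "A \<xi> = vzero"
    using pairing_nondegenerate[OF p A[OF \<xi>]] by (metis (no_types))
  with \<xi> show "\<xi> \<in> kerX p A" by (simp add: kerX_def)
qed

theorem lemma2p10:
  fixes p :: int and A Astar :: "('x::countable \<Rightarrow> qp) \<Rightarrow> ('x \<Rightarrow> qp)"
  assumes "prime p"
    and "A \<in> Bops p"
    and "is_adjoint p A Astar"
  shows "kerX p A = perpX p (imX p Astar)"
proof (rule kerX_eq_perpX_imX_adjoint)
  show "p > 1" using assms(1) by (simp add: prime_gt_1_int)
  show "\<And>\<xi>. \<xi> \<in> QpX p \<Longrightarrow> A \<xi> \<in> QpX p" using assms(2) by (simp add: Bops_def)
  show "\<And>\<xi> \<eta>. \<xi> \<in> QpX p \<Longrightarrow> \<eta> \<in> QpX p \<Longrightarrow> pairing p (A \<xi>) \<eta> = pairing p \<xi> (Astar \<eta>)"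
    using assms(3) by (simp add: is_adjoint_def)
qed

end
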